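(* Let $E$ be a row-finite graph and $k$ a field. Let $K:\mathbb Z^R\to\mathbb Z^R\oplus\mathbb Z^S$ be $K(x)=((B_E^t-I)x,\,C_E^tx)$ and let $\psi:\mathbb Z^R\oplus\mathbb Z^S=\mathbb Z^{E^0}\to K_0^{\mathrm{gr}}(L_k(E))$ be $\psi(\sum_v n_v\mathbf e_v)=\sum_v n_v v(0)$. Then $\phi\circ\psi|_{\mathbb Z^R}=\psi\circ K$, the restriction of $\psi$ is an isomorphism from $\operatorname{Ker}K$ onto $\operatorname{Ker}\phi$, and $\psi$ induces an isomorphism $\overline\psi:\operatorname{Coker}K\to\operatorname{Coker}\phi$, where $\phi:K_0^{\mathrm{gr}}(L_k(E))\to K_0^{\mathrm{gr}}(L_k(E))$ is the homomorphism with $\phi(v(i))=v(i+1)-v(i)$.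
   Context: $E=(E^0,E^1,r,s)$ is a row-finite directed graph (each vertex emits finitely many edges); $S$ is its set of sinks and $R=E^0\setminus S$. The adjacency matrix $A_E$ has $A_E(v,w)=|\{e:s(e)=v,r(e)=w\}|$; listing $R$ before $S$, $A_E=\begin{pmatrix}B_E&C_E\\0&0\end{pmatrix}$ with $B_E$ the $R\times R$ and $C_E$ the $R\times S$ block. For a set $X$, $\mathbb Z^X$ denotes the direct sum $\bigoplus_X\mathbb Z$ with basis $\mathbf e_v$. $L_k(E)$ is the Leavitt path algebra (generated by $E^0\cup E^1\cup\{e^*\}$ with relations $vw=\delta_{v,w}v$, $s(e)e=e=er(e)$, $r(e)e^*=e^*=e^*s(e)$, $e^*f=\delta_{e,f}r(e)$, $v=\sum_{s(e)=v}ee^*$ for non-sinks), $\mathbb Z$-graded by $\deg e=1,\deg e^*=-1$. $K_0^{\mathrm{gr}}(L_k(E))$ is identified with the group completion of the monoid generated by $v(i)$ ($v\in E^0$, $i\in\mathbb Z$) with relations $v(i)=\sum_{e\in s^{-1}(v)}r(e)(i-1)$ for non-sinks $v$, where $v(i)$ corresponds to the class of the graded module $L_k(E)v(-i)$. *)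

theory Defs
  imports "HOL-Algebra.Algebra"
begin

definition graph :: "'v set \<Rightarrow> 'e set \<Rightarrow> ('e \<Rightarrow> 'v) \<Rightarrow> ('e \<Rightarrow> 'v) \<Rightarrow> bool" where
  "graph V Ed r s \<longleftrightarrow> (\<forall>e\<in>Ed. s e \<in> V \<and> r e \<in> V)"

definition row_finite :: "'v set \<Rightarrow> 'e set \<Rightarrow> ('e \<Rightarrow> 'v) \<Rightarrow> bool" where
  "row_finite V Ed s \<longleftrightarrow> (\<forall>v\<in>V. finite {e\<in>Ed. s e = v})"

definition regV :: "'v set \<Rightarrow> 'e set \<Rightarrow> ('e \<Rightarrow> 'v) \<Rightarrow> 'v set" where
  "regV V Ed s = {v\<in>V. \<exists>e\<in>Ed. s e = v}"

definition sinks :: "'v set \<Rightarrow> 'e set \<Rightarrow> ('e \<Rightarrow> 'v) \<Rightarrow> 'v set" where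
  "sinks V Ed s = V - regV V Ed s"

definition adj :: "'e set \<Rightarrow> ('e \<Rightarrow> 'v) \<Rightarrow> ('e \<Rightarrow> 'v) \<Rightarrow> 'v \<Rightarrow> 'v \<Rightarrow> int" where
  "adj Ed r s v w = int (card {e\<in>Ed. s e = v \<and> r e = w})"

(* Z^X is free_Abelian_group X (finitely supported integer functions on X).
   K : Z^R -> Z^R (+) Z^S = Z^{E^0},  K x = ((B^t - I) x, C^t x) *)
definition Kmap :: "'v set \<Rightarrow> 'e set \<Rightarrow> ('e \<Rightarrow> 'v) \<Rightarrow> ('e \<Rightarrow> 'v) \<Rightarrow> ('v \<Rightarrow>\<^sub>0 int) \<Rightarrow> ('v \<Rightarrow>\<^sub>0 int)" where
  "Kmap V Ed r s x = Abs_poly_mapping (\<lambda>w.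
     if w \<in> regV V Ed s then
       (\<Sum>v\<in>Poly_Mapping.keys x. adj Ed r s v w * Poly_Mapping.lookup x v) - Poly_Mapping.lookup x w
     else if w \<in> sinks V Ed s then
       (\<Sum>v\<in>Poly_Mapping.keys x. adj Ed r s v w * Poly_Mapping.lookup x v)
     else 0)"

definition FG :: "'v set \<Rightarrow> ('v \<times> int \<Rightarrow>\<^sub>0 int) monoid" where
  "FG V = free_Abelian_group (V \<times> UNIV)"

definition relsub :: "'v set \<Rightarrow> 'e set \<Rightarrow> ('e \<Rightarrow> 'v) \<Rightarrow> ('e \<Rightarrow> 'v) \<Rightarrow> ('v \<times> int \<Rightarrow>\<^sub>0 int) set" where
  "relsub V Ed r s = generate (FG V)
     {Poly_Mapping.single (v, i) 1 - (\<Sum>e\<in>{e\<in>Ed. s e = v}. Poly_Mapping.single (r e, i - 1) 1)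
        | v i. v \<in> regV V Ed s}"

(* K_0^gr(L_k(E)): group completion of the monoid presented by generators v(i) and
   the relations above, i.e. the abelian group with that presentation *)
definition K0gr :: "'v set \<Rightarrow> 'e set \<Rightarrow> ('e \<Rightarrow> 'v) \<Rightarrow> ('e \<Rightarrow> 'v) \<Rightarrow> ('v \<times> int \<Rightarrow>\<^sub>0 int) set monoid" where
  "K0gr V Ed r s = FG V Mod relsub V Ed r s"

definition cls :: "'v set \<Rightarrow> 'e set \<Rightarrow> ('e \<Rightarrow> 'v) \<Rightarrow> ('e \<Rightarrow> 'v) \<Rightarrow> 'v \<Rightarrow> int \<Rightarrow> ('v \<times> int \<Rightarrow>\<^sub>0 int) set" where
  "cls V Ed r s v i = relsub V Ed r s #>\<^bsub>FG V\<^esub> Poly_Mapping.single (v, i) 1"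

definition psi :: "'v set \<Rightarrow> 'e set \<Rightarrow> ('e \<Rightarrow> 'v) \<Rightarrow> ('e \<Rightarrow> 'v) \<Rightarrow> ('v \<Rightarrow>\<^sub>0 int) \<Rightarrow> ('v \<times> int \<Rightarrow>\<^sub>0 int) set" where
  "psi V Ed r s x = relsub V Ed r s #>\<^bsub>FG V\<^esub>
      (\<Sum>v\<in>Poly_Mapping.keys x. Poly_Mapping.single (v, 0) (Poly_Mapping.lookup x v))"

end

theory Submission
  imports Defs
begin

(* Let T (degree_shift) be the shift v(i) -> v(i + 1) on Z^(X x Z), and D (relator_map) the map
   Z^(R x Z) -> Z^(E^0 x Z) sending (v, i) to v(i) - sum_{s(e) = v} r(e)(i - 1).  Then K_0^gr is the
   cokernel of D and phi is induced by T - 1.  D commutes with T and is injective (compare top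
   degrees); T - 1 is injective on every Z^(X x Z), with cokernel Z^X realised by the augmentation
   that forgets degrees.  The snake lemma for T - 1 acting on 0 -> Z^(R x Z) -> Z^(E^0 x Z) -> K_0^gr -> 0
   therefore gives an exact sequence 0 -> Ker phi -> Z^R -> Z^(E^0) -> Coker phi -> 0, whose middle
   map is the augmentation of D, namely -K, and whose outer maps are induced by psi. *)

section \<open>Degree shift and augmentation\<close>

lemma lookup_frag_extend:
  "Poly_Mapping.lookup (frag_extend f c) k =
     (\<Sum>i\<in>Poly_Mapping.keys c. Poly_Mapping.lookup c i * Poly_Mapping.lookup (f i) k)"
  by (simp add: frag_extend_def lookup_sum)

lemma frag_extend_frag_extend:
  "frag_extend f (frag_extend g c) = frag_extend (\<lambda>x. frag_extend f (g x)) c"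
  using subset_UNIV by (induction c rule: frag_induction) (auto simp: frag_extend_diff)

lemma frag_extend_diff_fun:
  "frag_extend (\<lambda>x. f x - g x) c = frag_extend f c - frag_extend g c"
  by (rule poly_mapping_eqI) (simp add: lookup_frag_extend lookup_minus right_diff_distrib sum_subtractf)

lemma top_degree_keyE:
  fixes z :: "'a \<times> int \<Rightarrow>\<^sub>0 int"
  assumes "z \<noteq> 0"
  obtains v j where "(v, j) \<in> Poly_Mapping.keys z" "\<And>k. k \<in> Poly_Mapping.keys z \<Longrightarrow> snd k \<le> j"
proof -
  define j where "j = Max (snd ` Poly_Mapping.keys z)"
  have "j \<in> snd ` Poly_Mapping.keys z"
    unfolding j_def using assms by (intro Max_in) auto
  then obtain v where vj: "(v, j) \<in> Poly_Mapping.keys z" by force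
  have top: "snd k \<le> j" if "k \<in> Poly_Mapping.keys z" for k
    unfolding j_def using that by (intro Max_ge) auto
  from vj top show thesis by (rule that)
qed

definition degree_shift :: "('a \<times> int \<Rightarrow>\<^sub>0 int) \<Rightarrow> ('a \<times> int \<Rightarrow>\<^sub>0 int)" where
  "degree_shift = frag_extend (\<lambda>k. frag_of (fst k, snd k + 1))"

definition in_degree :: "int \<Rightarrow> ('a \<Rightarrow>\<^sub>0 int) \<Rightarrow> ('a \<times> int \<Rightarrow>\<^sub>0 int)" where
  "in_degree j = frag_extend (\<lambda>v. frag_of (v, j))"

definition augmentation :: "('a \<times> int \<Rightarrow>\<^sub>0 int) \<Rightarrow> ('a \<Rightarrow>\<^sub>0 int)" where
  "augmentation = frag_extend (\<lambda>k. frag_of (fst k))"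

lemma degree_shift_of [simp]: "degree_shift (frag_of (v, i)) = frag_of (v, i + 1)"
  by (simp add: degree_shift_def)

lemma in_degree_of [simp]: "in_degree j (frag_of v) = frag_of (v, j)"
  by (simp add: in_degree_def)

lemma augmentation_of [simp]: "augmentation (frag_of k) = frag_of (fst k)"
  by (simp add: augmentation_def)

lemma degree_shift_0 [simp]: "degree_shift 0 = 0"
  and in_degree_0 [simp]: "in_degree j 0 = 0"
  and augmentation_0 [simp]: "augmentation 0 = 0"
  by (simp_all add: degree_shift_def in_degree_def augmentation_def)

lemma degree_shift_add: "degree_shift (a + b) = degree_shift a + degree_shift b"
  and degree_shift_diff: "degree_shift (a - b) = degree_shift a - degree_shift b"
  and in_degree_add: "in_degree j (x + y) = in_degree j x + in_degree j y"
  and in_degree_diff: "in_degree j (x - y) = in_degree j x - in_degree j y"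
  and augmentation_diff: "augmentation (a - b) = augmentation a - augmentation b"
  by (simp_all add: degree_shift_def in_degree_def augmentation_def frag_extend_add frag_extend_diff)

lemma keys_degree_shift:
  "Poly_Mapping.keys y \<subseteq> W \<times> UNIV \<Longrightarrow> Poly_Mapping.keys (degree_shift y) \<subseteq> W \<times> UNIV"
  unfolding degree_shift_def using keys_frag_extend by fastforce

lemma keys_in_degree:
  "Poly_Mapping.keys x \<subseteq> W \<Longrightarrow> Poly_Mapping.keys (in_degree j x) \<subseteq> W \<times> UNIV"
  unfolding in_degree_def using keys_frag_extend by fastforce

lemma keys_augmentation:
  "Poly_Mapping.keys y \<subseteq> W \<times> UNIV \<Longrightarrow> Poly_Mapping.keys (augmentation y) \<subseteq> W"
  unfolding augmentation_def using keys_frag_extend by fastforce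

lemma augmentation_degree_shift: "augmentation (degree_shift y) = augmentation y"
  by (simp add: augmentation_def degree_shift_def frag_extend_frag_extend)

lemma augmentation_in_degree: "augmentation (in_degree j x) = x"
  by (simp add: augmentation_def in_degree_def frag_extend_frag_extend flip: frag_expansion)

lemma degree_shift_in_degree: "degree_shift (in_degree j x) = in_degree (j + 1) x"
  by (simp add: in_degree_def degree_shift_def frag_extend_frag_extend)

lemma lookup_in_degree:
  "Poly_Mapping.lookup (in_degree j x) (v, i) = (if i = j then Poly_Mapping.lookup x v else 0)"
proof -
  have "Poly_Mapping.lookup (in_degree j x) (v, i) =
      (\<Sum>w\<in>Poly_Mapping.keys x. if (w, j) = (v, i) then Poly_Mapping.lookup x w else 0)"
    unfolding in_degree_def lookup_frag_extend by (rule sum.cong) (auto simp: lookup_single)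
  then show ?thesis by (simp add: in_keys_iff)
qed

lemma lookup_degree_shift:
  "Poly_Mapping.lookup (degree_shift z) (v, j) = Poly_Mapping.lookup z (v, j - 1)"
proof -
  have "Poly_Mapping.lookup (degree_shift z) (v, j) =
      (\<Sum>k\<in>Poly_Mapping.keys z. if k = (v, j - 1) then Poly_Mapping.lookup z k else 0)"
    unfolding degree_shift_def lookup_frag_extend by (rule sum.cong) (auto simp: lookup_single)
  also have "\<dots> = Poly_Mapping.lookup z (v, j - 1)"
    by (simp add: in_keys_iff)
  finally show ?thesis .
qed

lemma degree_shift_eq_self_iff: "degree_shift z = z \<longleftrightarrow> z = 0"
proof
  assume fixed: "degree_shift z = z"
  show "z = 0"
  proof (rule ccontr)
    assume "z \<noteq> 0"
    then obtain v j where vj: "(v, j) \<in> Poly_Mapping.keys z"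
      and top: "\<And>k. k \<in> Poly_Mapping.keys z \<Longrightarrow> snd k \<le> j"
      using top_degree_keyE by blast
    have "Poly_Mapping.lookup z (v, j + 1) = Poly_Mapping.lookup z (v, j)"
      using lookup_degree_shift[of z v "j + 1"] fixed by simp
    then have "(v, j + 1) \<in> Poly_Mapping.keys z" using vj by (simp add: in_keys_iff)
    then show False using top by fastforce
  qed
qed simp

lemma degree_shift_primitive_frag_ofE:
  assumes "v \<in> W"
  obtains q where "Poly_Mapping.keys q \<subseteq> W \<times> UNIV"
    "degree_shift q - q = frag_of (v, i) - frag_of (v, 0)"
proof -
  have "\<exists>q. Poly_Mapping.keys q \<subseteq> W \<times> UNIV \<and> degree_shift q - q = frag_of (v, i) - frag_of (v, 0)"
  proof (induction i rule: int_induct[where k = 0])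
    case base
    show ?case by (intro exI[of _ 0]) simp
  next
    case (step1 i)
    then obtain q where "Poly_Mapping.keys q \<subseteq> W \<times> UNIV"
      "degree_shift q - q = frag_of (v, i) - frag_of (v, 0)" by blast
    with assms show ?case
      by (intro exI[of _ "q + frag_of (v, i)"])
        (auto simp: degree_shift_add algebra_simps dest!: subsetD[OF keys_add])
  next
    case (step2 i)
    then obtain q where "Poly_Mapping.keys q \<subseteq> W \<times> UNIV"
      "degree_shift q - q = frag_of (v, i) - frag_of (v, 0)" by blast
    with assms show ?case
      by (intro exI[of _ "q - frag_of (v, i - 1)"])
        (auto simp: degree_shift_diff algebra_simps dest!: subsetD[OF keys_diff])
  qed
  then show thesis using that by blast
qed

lemma degree_shift_primitiveE:
  assumes "Poly_Mapping.keys h \<subseteq> W \<times> UNIV"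
  obtains q where "Poly_Mapping.keys q \<subseteq> W \<times> UNIV"
    "degree_shift q - q = h - in_degree 0 (augmentation h)"
proof -
  have "\<exists>q. Poly_Mapping.keys q \<subseteq> W \<times> UNIV \<and> degree_shift q - q = h - in_degree 0 (augmentation h)"
    using assms
  proof (induction h rule: free_Abelian_group_induct[consumes 1, case_names zero diff frag_of])
    case zero
    show ?case by (intro exI[of _ 0]) simp
  next
    case (diff a b)
    then obtain p q where p: "Poly_Mapping.keys p \<subseteq> W \<times> UNIV"
      "degree_shift p - p = a - in_degree 0 (augmentation a)"
      and q: "Poly_Mapping.keys q \<subseteq> W \<times> UNIV"
      "degree_shift q - q = b - in_degree 0 (augmentation b)" by blast
    have "degree_shift (p - q) - (p - q) = (degree_shift p - p) - (degree_shift q - q)"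
      by (simp add: degree_shift_diff)
    also have "\<dots> = (a - b) - in_degree 0 (augmentation (a - b))"
      using p(2) q(2) by (simp add: augmentation_diff in_degree_diff)
    finally show ?case
      using p(1) q(1) keys_diff[of p q] by blast
  next
    case (frag_of k)
    then obtain v i where k: "k = (v, i)" "v \<in> W" by auto
    obtain q where "Poly_Mapping.keys q \<subseteq> W \<times> UNIV"
      "degree_shift q - q = frag_of (v, i) - frag_of (v, 0)"
      by (rule degree_shift_primitive_frag_ofE[OF k(2)])
    with k show ?case by (intro exI[of _ q]) simp
  qed
  then show thesis using that by blast
qed

section \<open>Free abelian groups, cosets and restricted isomorphisms\<close>

lemma generate_frag_of:
  "generate (free_Abelian_group S) (frag_of ` S) = carrier (free_Abelian_group S)"
proof
  interpret group "free_Abelian_group S" by simp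
  show "generate (free_Abelian_group S) (frag_of ` S) \<subseteq> carrier (free_Abelian_group S)"
    by (rule generate_incl) auto
  show "carrier (free_Abelian_group S) \<subseteq> generate (free_Abelian_group S) (frag_of ` S)"
  proof
    fix x assume "x \<in> carrier (free_Abelian_group S)"
    then have "Poly_Mapping.keys x \<subseteq> S" by simp
    then show "x \<in> generate (free_Abelian_group S) (frag_of ` S)"
    proof (induction x rule: free_Abelian_group_induct[consumes 1, case_names zero diff frag_of])
      case zero
      show ?case using generate.one[of "free_Abelian_group S"] by simp
    next
      case (diff a b)
      have "inv\<^bsub>free_Abelian_group S\<^esub> b \<in> generate (free_Abelian_group S) (frag_of ` S)"
        using diff(4) by (intro generate_m_inv_closed) auto
      then have "a \<otimes>\<^bsub>free_Abelian_group S\<^esub> inv\<^bsub>free_Abelian_group S\<^esub> b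
          \<in> generate (free_Abelian_group S) (frag_of ` S)"
        by (rule generate.eng[OF diff(3)])
      then show ?case using diff(2) by simp
    next
      case (frag_of k)
      then show ?case by (simp add: generate.incl)
    qed
  qed
qed

lemma hom_free_Abelian_group_eqI:
  assumes "group H" "f \<in> hom (free_Abelian_group S) H" "g \<in> hom (free_Abelian_group S) H"
    and "\<And>a. a \<in> S \<Longrightarrow> f (frag_of a) = g (frag_of a)"
    and "x \<in> carrier (free_Abelian_group S)"
  shows "f x = g x"
proof -
  interpret f: group_hom "free_Abelian_group S" H f
    using assms(1,2) by (simp add: group_hom_def group_hom_axioms_def)
  interpret g: group_hom "free_Abelian_group S" H g
    using assms(1,3) by (simp add: group_hom_def group_hom_axioms_def)
  have "Poly_Mapping.keys x \<subseteq> S" using assms(5) by simp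
  then show ?thesis
  proof (induction x rule: free_Abelian_group_induct[consumes 1, case_names zero diff frag_of])
    case zero
    show ?case using f.hom_one g.hom_one by simp
  next
    case (diff a b)
    then have "f (a + - b) = g (a + - b)"
      using f.hom_mult[of a "- b"] g.hom_mult[of a "- b"] f.hom_inv[of b] g.hom_inv[of b] by simp
    then show ?case by simp
  qed (rule assms(4))
qed

lemma (in group) rcos_eq_iff:
  assumes "subgroup H G" "x \<in> carrier G" "y \<in> carrier G"
  shows "H #> x = H #> y \<longleftrightarrow> x \<otimes> inv y \<in> H"
proof
  assume "H #> x = H #> y"
  then have "x \<in> H #> y" using rcos_self[OF assms(2,1)] by simp
  then show "x \<otimes> inv y \<in> H" using assms by (simp add: subgroup.rcos_module)
next
  assume "x \<otimes> inv y \<in> H"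
  then have "x \<in> H #> y" using assms by (simp add: subgroup.rcos_module)
  then show "H #> x = H #> y" using repr_independence[OF _ assms(3,1)] by simp
qed

lemma (in group_hom) the_elem_image_rcos_kernel:
  assumes "g \<in> carrier G"
  shows "the_elem (h ` (kernel G H h #> g)) = h g"
proof -
  have "h ` (kernel G H h #> g) = {h g}"
  proof (intro equalityI subsetI)
    fix y assume "y \<in> h ` (kernel G H h #> g)"
    then obtain k where "k \<in> kernel G H h" "y = h (k \<otimes>\<^bsub>G\<^esub> g)"
      by (auto simp: r_coset_def)
    then show "y \<in> {h g}" using assms by (simp add: kernel_def)
  next
    have "\<one>\<^bsub>G\<^esub> \<otimes>\<^bsub>G\<^esub> g \<in> kernel G H h #> g"
      by (auto simp: r_coset_def kernel_def)
    then show "y \<in> h ` (kernel G H h #> g)" if "y \<in> {h g}" for y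
      using that assms by (metis G.l_one image_eqI singletonD)
  qed
  then show ?thesis by simp
qed

lemma iso_restrict_subgroupsI:
  assumes "group_hom G H f" "subgroup S G" "subgroup T H" "f ` S = T"
    and "\<And>x. x \<in> S \<Longrightarrow> f x = \<one>\<^bsub>H\<^esub> \<Longrightarrow> x = \<one>\<^bsub>G\<^esub>"
  shows "f \<in> iso (G\<lparr>carrier := S\<rparr>) (H\<lparr>carrier := T\<rparr>)"
proof -
  interpret group_hom G H f by (rule assms(1))
  interpret S: group "G\<lparr>carrier := S\<rparr>" using assms(2) by (rule subgroup.subgroup_is_group) simp
  interpret T: group "H\<lparr>carrier := T\<rparr>" using assms(3) by (rule subgroup.subgroup_is_group) simp
  have "f \<in> hom (G\<lparr>carrier := S\<rparr>) (H\<lparr>carrier := T\<rparr>)"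
  proof (rule homI)
    fix x y assume "x \<in> carrier (G\<lparr>carrier := S\<rparr>)" "y \<in> carrier (G\<lparr>carrier := S\<rparr>)"
    then have "x \<in> carrier G" "y \<in> carrier G" using subgroup.subset[OF assms(2)] by auto
    then show "f (x \<otimes>\<^bsub>G\<lparr>carrier := S\<rparr>\<^esub> y) = f x \<otimes>\<^bsub>H\<lparr>carrier := T\<rparr>\<^esub> f y" by simp
  qed (use assms(4) in auto)
  then interpret fST: group_hom "G\<lparr>carrier := S\<rparr>" "H\<lparr>carrier := T\<rparr>" f
    by unfold_locales
  have onto: "carrier (H\<lparr>carrier := T\<rparr>) \<subseteq> f ` carrier (G\<lparr>carrier := S\<rparr>)"
    using assms(4) by simp
  have inj: "x = \<one>\<^bsub>G\<lparr>carrier := S\<rparr>\<^esub>"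
    if "x \<in> carrier (G\<lparr>carrier := S\<rparr>)" "f x = \<one>\<^bsub>H\<lparr>carrier := T\<rparr>\<^esub>" for x
    using that assms(5)[of x] by simp
  show ?thesis
    using onto inj unfolding fST.iso_iff by blast
qed

section \<open>The relations of the graded Grothendieck group\<close>

locale row_finite_graph =
  fixes V :: "'v set" and Ed :: "'e set" and r s :: "'e \<Rightarrow> 'v"
  assumes graph: "graph V Ed r s" and row_finite: "row_finite V Ed s"
begin

abbreviation "R \<equiv> regV V Ed s"

definition succ_sum :: "'v \<Rightarrow> ('v \<Rightarrow>\<^sub>0 int)" where
  "succ_sum v = (\<Sum>e\<in>{e\<in>Ed. s e = v}. frag_of (r e))"

(* The transpose of the adjacency matrix A_E. *)
definition succ_map :: "('v \<Rightarrow>\<^sub>0 int) \<Rightarrow> ('v \<Rightarrow>\<^sub>0 int)" where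
  "succ_map = frag_extend succ_sum"

definition relator :: "'v \<times> int \<Rightarrow> ('v \<times> int \<Rightarrow>\<^sub>0 int)" where
  "relator k = frag_of k - in_degree (snd k - 1) (succ_sum (fst k))"

definition relator_map :: "('v \<times> int \<Rightarrow>\<^sub>0 int) \<Rightarrow> ('v \<times> int \<Rightarrow>\<^sub>0 int)" where
  "relator_map = frag_extend relator"

lemma regV_subset: "R \<subseteq> V"
  by (auto simp: regV_def)

lemma keys_succ_sum: "Poly_Mapping.keys (succ_sum v) \<subseteq> V"
  unfolding succ_sum_def using graph keys_sum by (fastforce simp: graph_def)

lemma keys_succ_map: "Poly_Mapping.keys (succ_map x) \<subseteq> V"
  unfolding succ_map_def using keys_frag_extend keys_succ_sum by fastforce

lemma succ_map_add: "succ_map (x + y) = succ_map x + succ_map y"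
  and succ_map_minus: "succ_map (- x) = - succ_map x"
  by (simp_all add: succ_map_def frag_extend_add frag_extend_minus)

lemma keys_succ_map_diff: "Poly_Mapping.keys x \<subseteq> V \<Longrightarrow> Poly_Mapping.keys (succ_map x - x) \<subseteq> V"
  using keys_succ_map[of x] keys_diff[of "succ_map x" x] by blast

lemma keys_relator_map:
  assumes "Poly_Mapping.keys g \<subseteq> V \<times> UNIV"
  shows "Poly_Mapping.keys (relator_map g) \<subseteq> V \<times> UNIV"
proof -
  have "Poly_Mapping.keys (relator k) \<subseteq> insert k (V \<times> UNIV)" for k
    unfolding relator_def using keys_diff keys_in_degree[OF keys_succ_sum] by fastforce
  then show ?thesis
    unfolding relator_map_def using assms keys_frag_extend[of relator g] by blast
qed

lemma relator_map_add: "relator_map (a + b) = relator_map a + relator_map b"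
  and relator_map_diff: "relator_map (a - b) = relator_map a - relator_map b"
  by (simp_all add: relator_map_def frag_extend_add frag_extend_diff)

lemma degree_shift_relator: "degree_shift (relator (v, i)) = relator (v, i + 1)"
  by (simp add: relator_def degree_shift_diff degree_shift_in_degree)

lemma relator_map_degree_shift: "relator_map (degree_shift g) = degree_shift (relator_map g)"
proof -
  have "relator_map (degree_shift g) = frag_extend (\<lambda>k. relator (fst k, snd k + 1)) g"
    by (simp add: relator_map_def degree_shift_def frag_extend_frag_extend)
  also have "\<dots> = frag_extend (\<lambda>k. degree_shift (relator k)) g"
    by (rule frag_extend_eq) (metis degree_shift_relator prod.collapse)
  also have "\<dots> = degree_shift (relator_map g)"
    by (simp add: relator_map_def degree_shift_def frag_extend_frag_extend)
  finally show ?thesis .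
qed

lemma relator_map_in_degree:
  "relator_map (in_degree j x) = in_degree j x - in_degree (j - 1) (succ_map x)"
  by (simp add: relator_map_def in_degree_def succ_map_def relator_def frag_extend_frag_extend
      frag_extend_diff_fun)

lemma augmentation_relator_map:
  "augmentation (relator_map g) = augmentation g - succ_map (augmentation g)"
proof -
  have "augmentation (relator_map g) = frag_extend (\<lambda>k. augmentation (relator k)) g"
    by (simp add: relator_map_def augmentation_def frag_extend_frag_extend)
  also have "\<dots> = frag_extend (\<lambda>k. frag_of (fst k) - succ_sum (fst k)) g"
    by (simp add: relator_def augmentation_diff augmentation_in_degree)
  also have "\<dots> = augmentation g - succ_map (augmentation g)"
    by (simp add: frag_extend_diff_fun augmentation_def succ_map_def frag_extend_frag_extend)
  finally show ?thesis .
qed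

lemma degree_shift_in_degree_diff:
  "degree_shift (in_degree j x) - in_degree j x
     = in_degree j (succ_map x - x) + relator_map (in_degree (j + 1) x)"
  by (simp add: degree_shift_in_degree relator_map_in_degree in_degree_diff)

lemma lookup_relator_top:
  assumes "snd k \<le> snd k'"
  shows "Poly_Mapping.lookup (relator k) k' = (if k = k' then 1 else 0)"
proof -
  obtain v' i' where "k' = (v', i')" by fastforce
  then show ?thesis
    using assms by (simp add: relator_def lookup_minus lookup_in_degree lookup_single)
qed

lemma relator_map_eq_0_iff: "relator_map g = 0 \<longleftrightarrow> g = 0"
proof
  assume D0: "relator_map g = 0"
  show "g = 0"
  proof (rule ccontr)
    assume "g \<noteq> 0"
    then obtain v j where vj: "(v, j) \<in> Poly_Mapping.keys g"
      and top: "\<And>k. k \<in> Poly_Mapping.keys g \<Longrightarrow> snd k \<le> j"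
      using top_degree_keyE by blast
    have "Poly_Mapping.lookup (relator_map g) (v, j) =
        (\<Sum>k\<in>Poly_Mapping.keys g. if k = (v, j) then Poly_Mapping.lookup g k else 0)"
      unfolding relator_map_def lookup_frag_extend
      by (rule sum.cong) (auto simp: lookup_relator_top top)
    also have "\<dots> = Poly_Mapping.lookup g (v, j)" using vj by simp
    finally show False using D0 vj by (simp add: in_keys_iff)
  qed
qed (simp add: relator_map_def)

lemma lookup_succ_sum: "v \<in> V \<Longrightarrow> Poly_Mapping.lookup (succ_sum v) w = adj Ed r s v w"
proof -
  assume "v \<in> V"
  then have fin: "finite {e\<in>Ed. s e = v}" using row_finite by (simp add: row_finite_def)
  have "Poly_Mapping.lookup (succ_sum v) w = (\<Sum>e\<in>{e\<in>Ed. s e = v}. if r e = w then 1 else 0)"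
    by (simp add: succ_sum_def lookup_sum lookup_single eq_commute)
  also have "\<dots> = (\<Sum>e\<in>{e\<in>{e\<in>Ed. s e = v}. r e = w}. 1)"
    by (rule sum.inter_filter[OF fin, symmetric])
  finally show ?thesis by (simp add: adj_def conj_assoc)
qed

lemma Kmap_eq:
  assumes "Poly_Mapping.keys x \<subseteq> R"
  shows "Kmap V Ed r s x = succ_map x - x"
proof -
  let ?A = "\<lambda>w. \<Sum>v\<in>Poly_Mapping.keys x. adj Ed r s v w * Poly_Mapping.lookup x v"
  have succ: "Poly_Mapping.lookup (succ_map x) w = ?A w" for w
    unfolding succ_map_def lookup_frag_extend
    by (rule sum.cong) (use assms regV_subset in \<open>auto simp: lookup_succ_sum\<close>)
  have "(\<lambda>w. if w \<in> R then ?A w - Poly_Mapping.lookup x w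
        else if w \<in> sinks V Ed s then ?A w else 0) = Poly_Mapping.lookup (succ_map x - x)"
  proof
    fix w
    have "w \<notin> R \<Longrightarrow> Poly_Mapping.lookup x w = 0"
      using assms by (auto simp: in_keys_iff)
    moreover have "w \<notin> V \<Longrightarrow> Poly_Mapping.lookup (succ_map x) w = 0"
      using keys_succ_map[of x] by (metis in_keys_iff subsetD)
    ultimately show "(if w \<in> R then ?A w - Poly_Mapping.lookup x w
        else if w \<in> sinks V Ed s then ?A w else 0) = Poly_Mapping.lookup (succ_map x - x) w"
      by (auto simp: sinks_def lookup_minus succ)
  qed
  then show ?thesis
    by (simp add: Kmap_def lookup_inverse)
qed

abbreviation "G \<equiv> free_Abelian_group (V \<times> (UNIV :: int set))"
abbreviation "N \<equiv> relsub V Ed r s"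
abbreviation "Q \<equiv> K0gr V Ed r s"
abbreviation quot :: "('v \<times> int \<Rightarrow>\<^sub>0 int) \<Rightarrow> ('v \<times> int \<Rightarrow>\<^sub>0 int) set" where
  "quot y \<equiv> N #>\<^bsub>G\<^esub> y"

lemma relator_map_hom: "relator_map \<in> hom (free_Abelian_group (R \<times> UNIV)) G"
proof (rule homI)
  fix g assume "g \<in> carrier (free_Abelian_group (R \<times> (UNIV :: int set)))"
  then have "Poly_Mapping.keys g \<subseteq> V \<times> UNIV" using regV_subset by auto
  then show "relator_map g \<in> carrier G" by (simp add: keys_relator_map)
qed (simp add: relator_map_add)

lemma relator_map_frag_of:
  assumes "v \<in> V"
  shows "relator_map (frag_of (v, i)) = frag_of (v, i) - (\<Sum>e\<in>{e\<in>Ed. s e = v}. frag_of (r e, i - 1))"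
proof -
  have "finite {e\<in>Ed. s e = v}" using assms row_finite by (simp add: row_finite_def)
  then show ?thesis
    by (simp add: relator_map_def relator_def succ_sum_def in_degree_def frag_extend_sum o_def)
qed

lemma relsub_eq_image: "N = relator_map ` carrier (free_Abelian_group (R \<times> UNIV))"
proof -
  interpret group_hom "free_Abelian_group (R \<times> UNIV)" G relator_map
    using relator_map_hom by (simp add: group_hom_def group_hom_axioms_def)
  have "N = generate G {Poly_Mapping.single (v, i) 1 - (\<Sum>e\<in>{e\<in>Ed. s e = v}. Poly_Mapping.single (r e, i - 1) 1)
      | v i. v \<in> R}"
    by (simp add: relsub_def FG_def)
  also have "{Poly_Mapping.single (v, i) 1 - (\<Sum>e\<in>{e\<in>Ed. s e = v}. Poly_Mapping.single (r e, i - 1) 1)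
      | v i. v \<in> R} = (\<lambda>k. frag_of k - (\<Sum>e\<in>{e\<in>Ed. s e = fst k}. frag_of (r e, snd k - 1))) ` (R \<times> UNIV)"
    by force
  also have "\<dots> = relator_map ` frag_of ` (R \<times> UNIV)"
    unfolding image_image
    by (rule image_cong) (use regV_subset in \<open>auto simp: relator_map_frag_of\<close>)
  also have "generate G \<dots> = relator_map ` carrier (free_Abelian_group (R \<times> UNIV))"
    by (simp add: generate_img generate_frag_of image_subset_iff)
  finally show ?thesis .
qed

lemma relsub_subgroup: "subgroup N G"
proof -
  interpret group_hom "free_Abelian_group (R \<times> UNIV)" G relator_map
    using relator_map_hom by (simp add: group_hom_def group_hom_axioms_def)
  show ?thesis unfolding relsub_eq_image by (rule img_is_subgroup)
qed

lemma relator_map_in_relsub: "Poly_Mapping.keys g \<subseteq> R \<times> UNIV \<Longrightarrow> relator_map g \<in> N"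
  by (simp add: relsub_eq_image)

lemma relsubE:
  assumes "n \<in> N"
  obtains g where "Poly_Mapping.keys g \<subseteq> R \<times> UNIV" "n = relator_map g"
  using assms by (auto simp: relsub_eq_image)

lemma comm_group_K0gr: "comm_group Q"
  unfolding K0gr_def FG_def
  by (rule comm_group.abelian_FactGroup[OF abelian_free_Abelian_group relsub_subgroup])

lemma group_K0gr: "group Q"
  using comm_group_K0gr by (rule comm_group.axioms(2))

lemma quot_hom: "quot \<in> hom G Q"
  unfolding K0gr_def FG_def
  by (rule normal.r_coset_hom_Mod)
    (rule comm_group.subgroup_imp_normal[OF abelian_free_Abelian_group relsub_subgroup])

lemma carrier_K0gr: "carrier Q = quot ` carrier G"
  by (simp add: K0gr_def FG_def carrier_FactGroup)

lemma one_K0gr: "\<one>\<^bsub>Q\<^esub> = quot 0"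
proof -
  have "quot 0 = N"
    using group.coset_join2[of G 0 N] relsub_subgroup subgroup.one_closed[OF relsub_subgroup] by simp
  then show ?thesis by (simp add: K0gr_def)
qed

lemma quot_eq_iff:
  assumes "a \<in> carrier G" "b \<in> carrier G"
  shows "quot a = quot b \<longleftrightarrow> a - b \<in> N"
  using group.rcos_eq_iff[OF _ relsub_subgroup assms] assms by simp

lemma psi_eq_quot: "psi V Ed r s x = quot (in_degree 0 x)"
proof -
  have cmul: "frag_cmul c (frag_of a) = Poly_Mapping.single a c" for c and a :: "'v \<times> int"
    by (rule poly_mapping_eqI) (simp add: lookup_single)
  show ?thesis by (simp add: psi_def FG_def in_degree_def frag_extend_def cmul)
qed

lemma psi_hom:
  assumes "W \<subseteq> V"
  shows "psi V Ed r s \<in> hom (free_Abelian_group W) Q"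
proof -
  have "in_degree 0 \<in> hom (free_Abelian_group W) G"
    using assms keys_in_degree[of _ W 0] by (intro homI) (auto simp: in_degree_add)
  moreover have "psi V Ed r s = quot \<circ> in_degree 0"
    by (simp add: fun_eq_iff psi_eq_quot)
  ultimately show ?thesis
    using quot_hom by (simp add: hom_compose)
qed

lemma degree_shift_diff_in_degree_cycle:
  assumes "succ_map x = x"
  shows "degree_shift (in_degree j x) - in_degree j x = relator_map (in_degree (j + 1) x)"
  using degree_shift_in_degree_diff[of j x] assms by simp

lemma cycle_eq_0_if_in_degree_in_relsub:
  assumes "succ_map x = x" "in_degree 0 x \<in> N"
  shows "x = 0"
proof -
  obtain g where g: "in_degree 0 x = relator_map g"
    using assms(2) by (rule relsubE)
  have "relator_map (in_degree 1 x) = degree_shift (in_degree 0 x) - in_degree 0 x"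
    using degree_shift_diff_in_degree_cycle[OF assms(1), of 0] by simp
  also have "\<dots> = relator_map (degree_shift g - g)"
    by (simp add: g relator_map_diff relator_map_degree_shift)
  finally have "in_degree 1 x = degree_shift g - g"
    using relator_map_eq_0_iff[of "in_degree 1 x - (degree_shift g - g)"] by (simp add: relator_map_diff)
  then have "x = augmentation (degree_shift g - g)"
    by (metis augmentation_in_degree)
  then show "x = 0"
    by (simp add: augmentation_diff augmentation_degree_shift)
qed

lemma degree_shift_diff_in_relsubE:
  assumes "degree_shift y - y \<in> N"
  obtains x where "Poly_Mapping.keys x \<subseteq> R" "succ_map x = x" "y - in_degree 0 x \<in> N"
proof -
  obtain g where g: "Poly_Mapping.keys g \<subseteq> R \<times> UNIV" "degree_shift y - y = relator_map g"
    using assms by (rule relsubE)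
  define x where "x = augmentation g"
  have kx: "Poly_Mapping.keys x \<subseteq> R"
    unfolding x_def by (rule keys_augmentation[OF g(1)])
  have "x - succ_map x = augmentation (degree_shift y - y)"
    by (simp add: x_def g(2) augmentation_relator_map)
  also have "\<dots> = 0"
    by (simp add: augmentation_diff augmentation_degree_shift)
  finally have cycle: "succ_map x = x" by simp
  obtain q where q: "Poly_Mapping.keys q \<subseteq> R \<times> UNIV" "degree_shift q - q = g - in_degree 0 x"
    unfolding x_def using g(1) by (rule degree_shift_primitiveE)
  note boundary = degree_shift_diff_in_degree_cycle[OF cycle]
  define z where "z = y - relator_map q - in_degree (-1) x"
  have "degree_shift z - z = (degree_shift y - y) - relator_map (degree_shift q - q)
      - (degree_shift (in_degree (-1) x) - in_degree (-1) x)"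
    by (simp add: z_def degree_shift_diff relator_map_diff relator_map_degree_shift)
  also have "\<dots> = 0"
    by (simp add: g(2) q(2) boundary relator_map_diff)
  finally have "degree_shift z = z" by simp
  then have "y = relator_map q + in_degree (-1) x"
    by (simp add: degree_shift_eq_self_iff z_def diff_eq_eq)
  then have "y - in_degree 0 x = relator_map q - (degree_shift (in_degree (-1) x) - in_degree (-1) x)"
    by (simp add: degree_shift_in_degree)
  also have "\<dots> = relator_map (q - in_degree 0 x)"
    by (simp add: boundary relator_map_diff)
  also have "\<dots> \<in> N"
    using q(1) keys_in_degree[OF kx, of 0] keys_diff[of q "in_degree 0 x"]
    by (intro relator_map_in_relsub) blast
  finally have "y - in_degree 0 x \<in> N" .
  with kx cycle show thesis by (rule that)
qed

lemma in_degree_in_relsub_plus_boundary_iff: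
  "(\<exists>q\<in>carrier G. in_degree 0 y - (degree_shift q - q) \<in> N)
     \<longleftrightarrow> (\<exists>x. Poly_Mapping.keys x \<subseteq> R \<and> y = succ_map x - x)"
proof
  assume "\<exists>q\<in>carrier G. in_degree 0 y - (degree_shift q - q) \<in> N"
  then obtain q where "in_degree 0 y - (degree_shift q - q) \<in> N" by blast
  then obtain g where g: "Poly_Mapping.keys g \<subseteq> R \<times> UNIV"
    "in_degree 0 y - (degree_shift q - q) = relator_map g"
    by (rule relsubE)
  have "y = augmentation (in_degree 0 y - (degree_shift q - q))"
    by (simp add: augmentation_diff augmentation_in_degree augmentation_degree_shift)
  also have "\<dots> = succ_map (- augmentation g) - (- augmentation g)"
    by (simp add: g(2) augmentation_relator_map succ_map_minus)
  finally have "y = succ_map (- augmentation g) - (- augmentation g)" .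
  moreover have "Poly_Mapping.keys (- augmentation g) \<subseteq> R"
    using keys_augmentation[OF g(1)] by simp
  ultimately show "\<exists>x. Poly_Mapping.keys x \<subseteq> R \<and> y = succ_map x - x"
    by blast
next
  assume "\<exists>x. Poly_Mapping.keys x \<subseteq> R \<and> y = succ_map x - x"
  then obtain x where x: "Poly_Mapping.keys x \<subseteq> R" "y = succ_map x - x" by blast
  have "in_degree 0 y - (degree_shift (in_degree 0 x) - in_degree 0 x) = relator_map (- in_degree 1 x)"
    by (simp add: x(2) degree_shift_in_degree_diff relator_map_def frag_extend_minus)
  moreover have "relator_map (- in_degree 1 x) \<in> N"
    using keys_in_degree[OF x(1)] by (simp add: relator_map_in_relsub)
  moreover have "in_degree 0 x \<in> carrier G"
    using keys_in_degree[OF x(1)] regV_subset by auto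
  ultimately show "\<exists>q\<in>carrier G. in_degree 0 y - (degree_shift q - q) \<in> N"
    by metis
qed

end

section \<open>Kernel and cokernel of phi\<close>

locale K0gr_shift = row_finite_graph V Ed r s
  for V :: "'v set" and Ed :: "'e set" and r s :: "'e \<Rightarrow> 'v" +
  fixes phi :: "('v \<times> int \<Rightarrow>\<^sub>0 int) set \<Rightarrow> ('v \<times> int \<Rightarrow>\<^sub>0 int) set"
  assumes phi_hom: "phi \<in> hom (K0gr V Ed r s) (K0gr V Ed r s)"
    and phi_gen: "\<forall>v\<in>V. \<forall>i::int. phi (cls V Ed r s v i) =
        cls V Ed r s v (i + 1) \<otimes>\<^bsub>K0gr V Ed r s\<^esub> inv\<^bsub>K0gr V Ed r s\<^esub> (cls V Ed r s v i)"
begin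

sublocale quot: group_hom G Q quot
  using quot_hom group_K0gr by (simp add: group_hom_def group_hom_axioms_def)

sublocale phi: group_hom Q Q phi
  using phi_hom group_K0gr by (simp add: group_hom_def group_hom_axioms_def)

lemma quot_diff:
  assumes "a \<in> carrier G" "b \<in> carrier G"
  shows "quot (a - b) = quot a \<otimes>\<^bsub>Q\<^esub> inv\<^bsub>Q\<^esub> quot b"
  using assms quot.hom_mult[of a "- b"] quot.hom_inv[of b] by simp

lemma degree_shift_diff_hom: "(\<lambda>y. degree_shift y - y) \<in> hom G G"
proof (rule homI)
  fix y assume "y \<in> carrier G"
  then show "degree_shift y - y \<in> carrier G"
    using keys_degree_shift[of y V] keys_diff[of "degree_shift y" y] by auto
qed (simp add: degree_shift_add)

lemma phi_quot:
  assumes "y \<in> carrier G"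
  shows "phi (quot y) = quot (degree_shift y - y)"
proof -
  have "(phi \<circ> quot) y = (quot \<circ> (\<lambda>y. degree_shift y - y)) y"
  proof (rule hom_free_Abelian_group_eqI[OF group_K0gr _ _ _ assms])
    show "phi \<circ> quot \<in> hom G Q"
      using quot_hom phi_hom by (rule hom_compose)
    show "quot \<circ> (\<lambda>y. degree_shift y - y) \<in> hom G Q"
      using degree_shift_diff_hom quot_hom by (rule hom_compose)
  next
    fix k assume "k \<in> V \<times> (UNIV :: int set)"
    then obtain v i where k: "k = (v, i)" "v \<in> V" by blast
    then have "phi (quot (frag_of k)) = quot (frag_of (v, i + 1)) \<otimes>\<^bsub>Q\<^esub> inv\<^bsub>Q\<^esub> quot (frag_of k)"
      using phi_gen by (simp add: cls_def FG_def)
    also have "\<dots> = quot (degree_shift (frag_of k) - frag_of k)"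
      using k by (simp add: quot_diff)
    finally show "(phi \<circ> quot) (frag_of k) = (quot \<circ> (\<lambda>y. degree_shift y - y)) (frag_of k)"
      by simp
  qed
  then show ?thesis by simp
qed

lemma quot_add_relsub:
  assumes "y \<in> carrier G" "n \<in> N"
  shows "quot (y + n) = quot y"
proof -
  have "n \<in> carrier G" using assms(2) by (rule subgroup.mem_carrier[OF relsub_subgroup])
  then have "y + n \<in> carrier G" using quot.G.m_closed[OF assms(1)] by simp
  then show ?thesis using assms by (simp add: quot_eq_iff)
qed

lemma phi_psi:
  assumes "Poly_Mapping.keys x \<subseteq> R"
  shows "phi (psi V Ed r s x) = psi V Ed r s (Kmap V Ed r s x)"
proof -
  have kV: "Poly_Mapping.keys x \<subseteq> V" using assms regV_subset by blast
  have "phi (psi V Ed r s x) = quot (in_degree 0 (succ_map x - x) + relator_map (in_degree 1 x))"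
    using phi_quot[of "in_degree 0 x"] keys_in_degree[OF kV]
    by (simp add: psi_eq_quot degree_shift_in_degree_diff)
  also have "\<dots> = quot (in_degree 0 (succ_map x - x))"
    using keys_in_degree[OF assms] keys_in_degree[OF keys_succ_map_diff[OF kV]]
    by (simp add: quot_add_relsub relator_map_in_relsub)
  also have "\<dots> = psi V Ed r s (Kmap V Ed r s x)"
    by (simp add: psi_eq_quot Kmap_eq[OF assms])
  finally show ?thesis .
qed

lemma Kmap_hom: "Kmap V Ed r s \<in> hom (free_Abelian_group R) (free_Abelian_group V)"
proof (rule homI)
  fix x assume x: "x \<in> carrier (free_Abelian_group R)"
  then have "Poly_Mapping.keys x \<subseteq> V" using regV_subset by auto
  with x show "Kmap V Ed r s x \<in> carrier (free_Abelian_group V)"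
    by (simp add: Kmap_eq keys_succ_map_diff)
next
  fix x y assume xy: "x \<in> carrier (free_Abelian_group R)" "y \<in> carrier (free_Abelian_group R)"
  then have "Poly_Mapping.keys (x + y) \<subseteq> R"
    using keys_add[of x y] by auto
  with xy show "Kmap V Ed r s (x \<otimes>\<^bsub>free_Abelian_group R\<^esub> y)
      = Kmap V Ed r s x \<otimes>\<^bsub>free_Abelian_group V\<^esub> Kmap V Ed r s y"
    by (simp add: Kmap_eq succ_map_add)
qed

lemma kernel_Kmap_iff:
  "x \<in> kernel (free_Abelian_group R) (free_Abelian_group V) (Kmap V Ed r s)
     \<longleftrightarrow> Poly_Mapping.keys x \<subseteq> R \<and> succ_map x = x"
  by (auto simp: kernel_def Kmap_eq)

lemma image_psi_kernel_Kmap: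
  "psi V Ed r s ` kernel (free_Abelian_group R) (free_Abelian_group V) (Kmap V Ed r s) = kernel Q Q phi"
proof (intro equalityI subsetI)
  fix m assume "m \<in> psi V Ed r s ` kernel (free_Abelian_group R) (free_Abelian_group V) (Kmap V Ed r s)"
  then obtain x where x: "Poly_Mapping.keys x \<subseteq> R" "succ_map x = x" "m = psi V Ed r s x"
    by (auto simp: kernel_Kmap_iff)
  have "phi m = psi V Ed r s (Kmap V Ed r s x)"
    using x(3) by (simp add: phi_psi[OF x(1)])
  also have "\<dots> = \<one>\<^bsub>Q\<^esub>"
    using x(1,2) by (simp add: Kmap_eq psi_eq_quot one_K0gr)
  finally show "m \<in> kernel Q Q phi"
    using x(1,3) hom_in_carrier[OF psi_hom[OF regV_subset]] by (simp add: kernel_def)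
next
  fix m assume "m \<in> kernel Q Q phi"
  then have m: "m \<in> carrier Q" "phi m = quot 0" by (simp_all add: kernel_def one_K0gr)
  then obtain y where y: "y \<in> carrier G" "m = quot y" by (auto simp: carrier_K0gr)
  have "degree_shift y - y \<in> carrier G"
    using hom_in_carrier[OF degree_shift_diff_hom y(1)] .
  then have "degree_shift y - y \<in> N"
    using m(2) y by (simp add: phi_quot quot_eq_iff)
  then obtain x where x: "Poly_Mapping.keys x \<subseteq> R" "succ_map x = x" "y - in_degree 0 x \<in> N"
    by (rule degree_shift_diff_in_relsubE)
  have "in_degree 0 x \<in> carrier G"
    using keys_in_degree[OF x(1)] regV_subset by auto
  then have "m = psi V Ed r s x"
    using x(3) y by (simp add: psi_eq_quot quot_eq_iff)
  then show "m \<in> psi V Ed r s ` kernel (free_Abelian_group R) (free_Abelian_group V) (Kmap V Ed r s)"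
    using x(1,2) by (auto simp: kernel_Kmap_iff)
qed

lemma kernel_Kmap_psi_eq_one_imp_eq_0:
  assumes "x \<in> kernel (free_Abelian_group R) (free_Abelian_group V) (Kmap V Ed r s)"
    and "psi V Ed r s x = \<one>\<^bsub>Q\<^esub>"
  shows "x = 0"
proof -
  have "in_degree 0 x \<in> carrier G"
    using assms(1) regV_subset keys_in_degree[of x V 0] by (auto simp: kernel_Kmap_iff)
  with assms have "succ_map x = x" "in_degree 0 x \<in> N"
    by (auto simp: kernel_Kmap_iff psi_eq_quot one_K0gr quot_eq_iff)
  then show "x = 0"
    by (rule cycle_eq_0_if_in_degree_in_relsub)
qed

lemma psi_kernel_iso:
  "psi V Ed r s \<in> iso
     ((free_Abelian_group R)\<lparr>carrier := kernel (free_Abelian_group R) (free_Abelian_group V) (Kmap V Ed r s)\<rparr>)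
     (Q\<lparr>carrier := kernel Q Q phi\<rparr>)"
proof (rule iso_restrict_subgroupsI)
  show "group_hom (free_Abelian_group R) Q (psi V Ed r s)"
    using psi_hom[OF regV_subset] group_K0gr by (simp add: group_hom_def group_hom_axioms_def)
  show "subgroup (kernel (free_Abelian_group R) (free_Abelian_group V) (Kmap V Ed r s)) (free_Abelian_group R)"
    using Kmap_hom by (intro group_hom.subgroup_kernel) (simp add: group_hom_def group_hom_axioms_def)
qed (simp_all add: phi.subgroup_kernel image_psi_kernel_Kmap kernel_Kmap_psi_eq_one_imp_eq_0)

lemma psi_in_image_phi_iff:
  assumes "y \<in> carrier (free_Abelian_group V)"
  shows "psi V Ed r s y \<in> phi ` carrier Q \<longleftrightarrow> y \<in> Kmap V Ed r s ` carrier (free_Abelian_group R)"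
proof -
  have y0: "in_degree 0 y \<in> carrier G"
    using assms keys_in_degree[of y V 0] by simp
  have "phi ` carrier Q = (\<lambda>q. quot (degree_shift q - q)) ` carrier G"
    unfolding carrier_K0gr image_image by (rule image_cong) (simp_all add: phi_quot)
  then have "psi V Ed r s y \<in> phi ` carrier Q
      \<longleftrightarrow> (\<exists>q\<in>carrier G. quot (in_degree 0 y) = quot (degree_shift q - q))"
    by (auto simp: psi_eq_quot)
  also have "\<dots> \<longleftrightarrow> (\<exists>q\<in>carrier G. in_degree 0 y - (degree_shift q - q) \<in> N)"
    using y0 hom_in_carrier[OF degree_shift_diff_hom] by (simp add: quot_eq_iff)
  also have "\<dots> \<longleftrightarrow> (\<exists>x. Poly_Mapping.keys x \<subseteq> R \<and> y = succ_map x - x)"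
    by (rule in_degree_in_relsub_plus_boundary_iff)
  also have "\<dots> \<longleftrightarrow> y \<in> Kmap V Ed r s ` carrier (free_Abelian_group R)"
  proof
    assume "\<exists>x. Poly_Mapping.keys x \<subseteq> R \<and> y = succ_map x - x"
    then obtain x where "Poly_Mapping.keys x \<subseteq> R" "y = succ_map x - x" by blast
    then show "y \<in> Kmap V Ed r s ` carrier (free_Abelian_group R)"
      by (intro image_eqI[of _ _ x]) (simp_all add: Kmap_eq)
  next
    assume "y \<in> Kmap V Ed r s ` carrier (free_Abelian_group R)"
    then obtain x where "Poly_Mapping.keys x \<subseteq> R" "y = Kmap V Ed r s x" by auto
    then show "\<exists>x. Poly_Mapping.keys x \<subseteq> R \<and> y = succ_map x - x"
      by (auto simp: Kmap_eq)
  qed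
  finally show ?thesis .
qed

lemma quot_div_psi_augmentation_in_image_phi:
  assumes "y \<in> carrier G"
  shows "quot y \<otimes>\<^bsub>Q\<^esub> inv\<^bsub>Q\<^esub> psi V Ed r s (augmentation y) \<in> phi ` carrier Q"
proof -
  have ky: "Poly_Mapping.keys y \<subseteq> V \<times> UNIV" using assms by simp
  obtain q where q: "Poly_Mapping.keys q \<subseteq> V \<times> UNIV"
    "degree_shift q - q = y - in_degree 0 (augmentation y)"
    using ky by (rule degree_shift_primitiveE)
  have "in_degree 0 (augmentation y) \<in> carrier G"
    using keys_in_degree[OF keys_augmentation[OF ky], of 0] by simp
  then have "quot y \<otimes>\<^bsub>Q\<^esub> inv\<^bsub>Q\<^esub> psi V Ed r s (augmentation y) = phi (quot q)"
    using assms q by (simp add: psi_eq_quot quot_diff phi_quot)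
  moreover have "quot q \<in> carrier Q"
    using q(1) by (simp add: carrier_K0gr)
  ultimately show ?thesis by simp
qed

lemma image_phi_normal: "phi ` carrier Q \<lhd> Q"
  using comm_group_K0gr phi.img_is_subgroup by (rule comm_group.subgroup_imp_normal)

definition coker_psi :: "('v \<Rightarrow>\<^sub>0 int) \<Rightarrow> ('v \<times> int \<Rightarrow>\<^sub>0 int) set set" where
  "coker_psi y = phi ` carrier Q #>\<^bsub>Q\<^esub> psi V Ed r s y"

lemma coker_psi_hom: "group_hom (free_Abelian_group V) (Q Mod phi ` carrier Q) coker_psi"
proof -
  have "coker_psi \<in> hom (free_Abelian_group V) (Q Mod phi ` carrier Q)"
    unfolding coker_psi_def
    using hom_compose[OF psi_hom[OF order_refl] normal.r_coset_hom_Mod[OF image_phi_normal]]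
    by (simp add: o_def)
  then show ?thesis
    using normal.factorgroup_is_group[OF image_phi_normal]
    by (simp add: group_hom_def group_hom_axioms_def)
qed

lemma image_coker_psi: "coker_psi ` carrier (free_Abelian_group V) = carrier (Q Mod phi ` carrier Q)"
proof (intro equalityI subsetI)
  fix M assume "M \<in> coker_psi ` carrier (free_Abelian_group V)"
  then show "M \<in> carrier (Q Mod phi ` carrier Q)"
    using group_hom.hom_closed[OF coker_psi_hom] by blast
next
  fix M assume "M \<in> carrier (Q Mod phi ` carrier Q)"
  then obtain y where y: "y \<in> carrier G" "M = phi ` carrier Q #>\<^bsub>Q\<^esub> quot y"
    by (auto simp: carrier_FactGroup carrier_K0gr)
  have ay: "augmentation y \<in> carrier (free_Abelian_group V)"
    using y(1) keys_augmentation[of y V] by simp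
  have "M = coker_psi (augmentation y)"
    unfolding y(2) coker_psi_def
    using group.rcos_eq_iff[OF group_K0gr phi.img_is_subgroup] quot_div_psi_augmentation_in_image_phi[OF y(1)]
      quot.hom_closed[OF y(1)] hom_in_carrier[OF psi_hom[OF order_refl] ay]
    by blast
  with ay show "M \<in> coker_psi ` carrier (free_Abelian_group V)" by blast
qed

lemma kernel_coker_psi:
  "kernel (free_Abelian_group V) (Q Mod phi ` carrier Q) coker_psi
     = Kmap V Ed r s ` carrier (free_Abelian_group R)"
proof -
  have coset_iff: "coker_psi y = phi ` carrier Q \<longleftrightarrow> psi V Ed r s y \<in> phi ` carrier Q"
    if "y \<in> carrier (free_Abelian_group V)" for y
  proof -
    have psi_y: "psi V Ed r s y \<in> carrier Q"
      using hom_in_carrier[OF psi_hom[OF order_refl] that] .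
    show ?thesis
      unfolding coker_psi_def
      using group.coset_join1[OF group_K0gr _ psi_y phi.img_is_subgroup]
        group.coset_join2[OF group_K0gr psi_y phi.img_is_subgroup] by blast
  qed
  have iff: "coker_psi y = phi ` carrier Q \<longleftrightarrow> y \<in> Kmap V Ed r s ` carrier (free_Abelian_group R)"
    if "y \<in> carrier (free_Abelian_group V)" for y
    using coset_iff[OF that] psi_in_image_phi_iff[OF that] by simp
  show ?thesis
  proof (intro equalityI subsetI)
    fix y assume "y \<in> kernel (free_Abelian_group V) (Q Mod phi ` carrier Q) coker_psi"
    then have "y \<in> carrier (free_Abelian_group V)" "coker_psi y = phi ` carrier Q"
      by (simp_all add: kernel_def)
    then show "y \<in> Kmap V Ed r s ` carrier (free_Abelian_group R)"
      using iff by blast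
  next
    fix y assume y: "y \<in> Kmap V Ed r s ` carrier (free_Abelian_group R)"
    moreover have "y \<in> carrier (free_Abelian_group V)"
      using y hom_in_carrier[OF Kmap_hom] by blast
    ultimately show "y \<in> kernel (free_Abelian_group V) (Q Mod phi ` carrier Q) coker_psi"
      using iff by (simp add: kernel_def)
  qed
qed

lemma psi_cokernel_iso:
  "\<exists>psibar. psibar \<in> iso
        (free_Abelian_group V Mod (Kmap V Ed r s ` carrier (free_Abelian_group R)))
        (Q Mod (phi ` carrier Q))
      \<and> (\<forall>y\<in>carrier (free_Abelian_group V).
           psibar ((Kmap V Ed r s ` carrier (free_Abelian_group R)) #>\<^bsub>free_Abelian_group V\<^esub> y)
           = (phi ` carrier Q) #>\<^bsub>Q\<^esub> psi V Ed r s y)"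
proof (intro exI conjI ballI)
  interpret coker_psi: group_hom "free_Abelian_group V" "Q Mod phi ` carrier Q" coker_psi
    by (rule coker_psi_hom)
  show "(\<lambda>C. the_elem (coker_psi ` C))
      \<in> iso (free_Abelian_group V Mod (Kmap V Ed r s ` carrier (free_Abelian_group R))) (Q Mod (phi ` carrier Q))"
    using coker_psi.FactGroup_iso_set[OF image_coker_psi] by (simp add: kernel_coker_psi)
  show "the_elem (coker_psi ` (Kmap V Ed r s ` carrier (free_Abelian_group R) #>\<^bsub>free_Abelian_group V\<^esub> y))
      = phi ` carrier Q #>\<^bsub>Q\<^esub> psi V Ed r s y"
    if "y \<in> carrier (free_Abelian_group V)" for y
    using coker_psi.the_elem_image_rcos_kernel[OF that] by (simp add: kernel_coker_psi coker_psi_def)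
qed

end

theorem proposition4p4:
  fixes V :: "'v set" and Ed :: "'e set" and r s :: "'e \<Rightarrow> 'v"
    and phi :: "('v \<times> int \<Rightarrow>\<^sub>0 int) set \<Rightarrow> ('v \<times> int \<Rightarrow>\<^sub>0 int) set"
  assumes "graph V Ed r s"
    and "row_finite V Ed s"
    and phi_hom: "phi \<in> hom (K0gr V Ed r s) (K0gr V Ed r s)"
    and phi_gen: "\<forall>v\<in>V. \<forall>i::int. phi (cls V Ed r s v i) =
        cls V Ed r s v (i + 1) \<otimes>\<^bsub>K0gr V Ed r s\<^esub> inv\<^bsub>K0gr V Ed r s\<^esub> (cls V Ed r s v i)"
  shows "(\<forall>x\<in>carrier (free_Abelian_group (regV V Ed s)).
            phi (psi V Ed r s x) = psi V Ed r s (Kmap V Ed r s x))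
     \<and> psi V Ed r s \<in> iso
         ((free_Abelian_group (regV V Ed s))\<lparr>carrier :=
            kernel (free_Abelian_group (regV V Ed s)) (free_Abelian_group V) (Kmap V Ed r s)\<rparr>)
         ((K0gr V Ed r s)\<lparr>carrier := kernel (K0gr V Ed r s) (K0gr V Ed r s) phi\<rparr>)
     \<and> (\<exists>psibar. psibar \<in> iso
            (free_Abelian_group V Mod (Kmap V Ed r s ` carrier (free_Abelian_group (regV V Ed s))))
            (K0gr V Ed r s Mod (phi ` carrier (K0gr V Ed r s)))
          \<and> (\<forall>y\<in>carrier (free_Abelian_group V).
               psibar ((Kmap V Ed r s ` carrier (free_Abelian_group (regV V Ed s)))
                         #>\<^bsub>free_Abelian_group V\<^esub> y)
               = (phi ` carrier (K0gr V Ed r s)) #>\<^bsub>K0gr V Ed r s\<^esub> psi V Ed r s y))"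
proof -
  interpret K0gr_shift V Ed r s phi
    using assms by unfold_locales
  show ?thesis
    using phi_psi psi_kernel_iso psi_cokernel_iso by simp
qed

end
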